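(* Let $\alpha:\mathbb{C}\to\mathbb{C}$ be an exponential automorphism, i.e. a function satisfying $\alpha(z_1+z_2)=\alpha(z_1)+\alpha(z_2)$ and $\alpha(e^z)=e^{\alpha(z)}$ for all $z,z_1,z_2\in\mathbb{C}$. Suppose that either $\alpha(x)\in\mathbb{R}$ for all $x\in\mathbb{R}$, or $\alpha$ is continuous. Then $\alpha(2^{1/k})=2^{1/k}$ for $k=2,3,4$ and $\alpha(\ln 2)=\ln 2$.
   Context: Here $2^{1/k}$ denotes the positive real $k$th root of $2$, and $\ln 2$ the real natural logarithm of $2$. *)

theory Defs
  imports "HOL-Analysis.Analysis"
begin

definition exp_automorphism :: "(complex \<Rightarrow> complex) \<Rightarrow> bool" where
  "exp_automorphism \<alpha> \<longleftrightarrow>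
     (\<forall>z1 z2. \<alpha> (z1 + z2) = \<alpha> z1 + \<alpha> z2) \<and> (\<forall>z. \<alpha> (exp z) = exp (\<alpha> z))"

end

theory Submission
  imports Defs
begin

text \<open>An exponential automorphism is additive and maps \<open>1 = exp 0\<close> to \<open>exp 0 = 1\<close>, so it fixes
  every rational number. Each of the two alternative hypotheses upgrades this to all reals:
  a continuous map fixing \<open>\<rat>\<close> fixes its closure \<open>\<real>\<close>; and if \<open>\<alpha>\<close> preserves \<open>\<real>\<close>, then on
  \<open>\<real>\<close> it maps positives \<open>exp t\<close> to positives \<open>exp (\<alpha> t)\<close>, i.e. it is monotone, and a monotone
  additive map of \<open>\<real>\<close> fixing \<open>\<rat>\<close> is the identity.\<close>

(* The qualifier selects the locale of additive maps: unqualified, \<open>additive\<close> is the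
   set-function notion of \<open>Measure_Space\<close>. *)
lemma additive_of_int_mult:
  fixes f :: "'a::ring_1 \<Rightarrow> 'b::ring_1"
  assumes "Modules.additive f"
  shows "f (of_int n * x) = of_int n * f x"
proof -
  interpret additive f by fact
  have of_nat_mult: "f (of_nat m * x) = of_nat m * f x" for m
    by (induction m) (simp_all add: zero add distrib_right)
  show ?thesis
  proof (cases "n \<ge> 0")
    case True
    then show ?thesis using of_nat_mult[of "nat n"] by simp
  next
    case False
    then show ?thesis using of_nat_mult[of "nat (- n)"] minus[of "of_nat (nat (- n)) * x"] by simp
  qed
qed

lemma additive_fixes_of_rat:
  fixes f :: "'a::field_char_0 \<Rightarrow> 'b::field_char_0"
  assumes f_additive: "Modules.additive f" and one: "f 1 = 1"
  shows "f (of_rat r) = of_rat r"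
proof -
  obtain a b where r: "r = Fract a b" and "b > 0"
    by (cases r) auto
  then have b: "of_int b \<noteq> (0 :: 'b)" and of_rat_r: "of_rat r = (of_int a / of_int b :: 'a)"
    by (simp_all add: of_rat_rat)
  have "of_int b * f (of_rat r) = f (of_int b * of_rat r)"
    using additive_of_int_mult[OF f_additive] by simp
  also have "\<dots> = f (of_int a * 1)"
    using \<open>b > 0\<close> by (simp add: of_rat_r)
  also have "\<dots> = of_int a"
    using additive_of_int_mult[OF f_additive, of a 1] one by simp
  finally show ?thesis
    using b by (simp add: of_rat_rat r field_simps)
qed

lemma continuous_fixes_of_real:
  fixes f :: "'a::real_normed_field \<Rightarrow> 'a"
  assumes "continuous_on UNIV f" and "\<And>r. f (of_rat r) = of_rat r"
  shows "f (of_real x) = of_real x"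
proof -
  have "continuous_on (closure \<rat>) (\<lambda>x. f (of_real x) - of_real x)"
    by (intro continuous_intros continuous_on_compose2[OF assms(1)]) auto
  moreover have "f (of_real q) - of_real q = 0" if "q \<in> \<rat>" for q
    using that assms(2) by (induction rule: Rats_induct) (simp add: of_rat_def)
  ultimately have "f (of_real x) - of_real x = 0"
    by (rule continuous_constant_on_closure) (simp_all add: Rats_closure_real)
  then show ?thesis by simp
qed

lemma additive_nonneg_real_eq_id:
  fixes g :: "real \<Rightarrow> real"
  assumes g_additive: "Modules.additive g" and one: "g 1 = 1"
    and nonneg: "\<And>x. 0 \<le> x \<Longrightarrow> 0 \<le> g x"
  shows "g x = x"
proof -
  interpret additive g by fact
  have fixes_Rats: "g q = q" if "q \<in> \<rat>" for q
    using that additive_fixes_of_rat[OF g_additive one] by (induction rule: Rats_induct) simp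
  show ?thesis
  proof (rule ccontr)
    assume "g x \<noteq> x"
    then obtain q where "q \<in> \<rat>" and between: "g x < q \<and> q < x \<or> x < q \<and> q < g x"
      by (metis Rats_dense_in_real linorder_neq_iff)
    then have "g (x - q) = g x - q" and "g (q - x) = q - g x"
      by (simp_all add: diff fixes_Rats)
    then show False
      using between nonneg[of "x - q"] nonneg[of "q - x"] by linarith
  qed
qed

lemma exp_automorphism_additive: "exp_automorphism \<alpha> \<Longrightarrow> Modules.additive \<alpha>"
  unfolding exp_automorphism_def by unfold_locales blast

lemma exp_automorphism_fixes_of_rat:
  assumes "exp_automorphism \<alpha>"
  shows "\<alpha> (of_rat r) = of_rat r"
proof -
  have additive: "Modules.additive \<alpha>"
    using assms by (rule exp_automorphism_additive)
  have "\<alpha> 1 = exp (\<alpha> 0)"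
    using assms unfolding exp_automorphism_def by (metis exp_zero)
  then have "\<alpha> 1 = 1"
    by (simp add: additive.zero[OF additive])
  with additive show ?thesis
    by (rule additive_fixes_of_rat)
qed

lemma exp_automorphism_real_valued_fixes_of_real:
  assumes "exp_automorphism \<alpha>" and real_valued: "\<And>x. \<alpha> (complex_of_real x) \<in> \<real>"
  shows "\<alpha> (complex_of_real x) = complex_of_real x"
proof -
  define g where "g x = Re (\<alpha> (complex_of_real x))" for x
  have \<alpha>_g: "\<alpha> (complex_of_real x) = complex_of_real (g x)" for x
    using real_valued[of x] by (simp add: g_def Reals_def)
  interpret additive \<alpha> using exp_automorphism_additive[OF assms(1)] .
  have "Modules.additive g"
    by unfold_locales (simp add: g_def add)
  moreover have "g 1 = 1"
    using exp_automorphism_fixes_of_rat[OF assms(1), of 1] by (simp add: g_def)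
  moreover have "0 \<le> g y" if "0 \<le> y" for y
  proof (cases "y = 0")
    case False
    then have "complex_of_real y = exp (complex_of_real (ln y))"
      using that by (simp add: exp_of_real)
    then have "g y = exp (g (ln y))"
      using assms(1) unfolding exp_automorphism_def g_def
      by (metis Re_complex_of_real \<alpha>_g exp_of_real)
    then show ?thesis by simp
  qed (simp add: g_def zero)
  ultimately show ?thesis
    using \<alpha>_g additive_nonneg_real_eq_id by metis
qed

theorem mainTheorem5:
  fixes \<alpha> :: "complex \<Rightarrow> complex"
  assumes "exp_automorphism \<alpha>"
    and "(\<forall>x::real. \<alpha> (complex_of_real x) \<in> \<real>) \<or> continuous_on UNIV \<alpha>"
  shows "(\<forall>k\<in>{2,3,4::nat}. \<alpha> (complex_of_real (root k 2)) = complex_of_real (root k 2))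
         \<and> \<alpha> (complex_of_real (ln 2)) = complex_of_real (ln 2)"
proof -
  have "\<alpha> (complex_of_real x) = complex_of_real x" for x
    using assms(2)
  proof
    assume "\<forall>x. \<alpha> (complex_of_real x) \<in> \<real>"
    then show ?thesis
      using exp_automorphism_real_valued_fixes_of_real[OF assms(1)] by blast
  next
    assume "continuous_on UNIV \<alpha>"
    then show ?thesis
      using continuous_fixes_of_real exp_automorphism_fixes_of_rat[OF assms(1)] by blast
  qed
  then show ?thesis by simp
qed

end
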